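(* For every integer $L\ge 0$ and every integer $n\ge 0$, $$b_L(n+1)=\frac{1}{n+1}\sum_{k=0}^{n}\binom{n+1}{k}^{L+1}(n+1-k)\,b_L(k)=\sum_{k=0}^{n}\binom{n}{k}\binom{n+1}{k}^{L}b_L(k),\qquad b_L(0)=1.$$ Consequently every $b_L(n)$ is a positive integer.
   Context: For an integer $L\ge 0$ let ${}_0F_L(z)=\sum_{n=0}^{\infty}\frac{z^n}{(n!)^{L+1}}$ (the hypergeometric series ${}_0F_L(1,\ldots,1;z)$ with $L$ parameters equal to $1$; e.g. ${}_0F_0(z)=e^z$). Define the real numbers $b_L(n)$, $n\ge 0$, by the formal power series identity $\exp\big({}_0F_L(z)-1\big)=\sum_{n=0}^{\infty}b_L(n)\frac{z^n}{(n!)^{L+1}}$. *)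

theory Defs
  imports "HOL-Computational_Algebra.Formal_Power_Series"
begin

definition hyp0F :: "nat \<Rightarrow> real fps" where
  "hyp0F L = Abs_fps (\<lambda>n. 1 / (fact n) ^ (L + 1))"

text \<open>b_L(n) defined by exp(0F_L(z) - 1) = sum b_L(n) z^n / (n!)^(L+1),
  where exp(G) for G with zero constant term is the composition fps_exp 1 oo G.\<close>
definition bL :: "nat \<Rightarrow> nat \<Rightarrow> real" where
  "bL L n = (fact n) ^ (L + 1) * fps_nth (fps_exp 1 oo (hyp0F L - 1)) n"

end

theory Submission
  imports Defs
begin

text \<open>Write E = exp(G) with G = 0F_L - 1, and let e_n, g_n be the coefficients of E and G.
  Differentiating gives E' = E G', i.e. (n+1) e_(n+1) = sum_k (n+1-k) g_(n+1-k) e_k.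
  Substituting e_k = b_L(k)/(k!)^(L+1) and g_j = 1/(j!)^(L+1) turns the factorials into
  binomial coefficients, which is the first recursion; absorbing (n+1-k) into C(n+1,k) gives
  the second. Its coefficients are nonnegative integers and its k = 0 term is b_L(0) = 1,
  so integrality and positivity follow by induction.\<close>

lemma fps_deriv_exp_compose:
  fixes G :: "'a::field_char_0 fps"
  assumes "fps_nth G 0 = 0"
  shows "fps_deriv (fps_exp 1 oo G) = (fps_exp 1 oo G) * fps_deriv G"
  using fps_compose_deriv[OF assms, of "fps_exp 1"] by simp

lemma fps_exp_compose_nth_Suc:
  fixes G :: "'a::field_char_0 fps"
  assumes "fps_nth G 0 = 0"
  shows "of_nat (n + 1) * fps_nth (fps_exp 1 oo G) (n + 1) =
         (\<Sum>k=0..n. of_nat (n + 1 - k) * fps_nth G (n + 1 - k) * fps_nth (fps_exp 1 oo G) k)"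
proof -
  have "of_nat (n + 1) * fps_nth (fps_exp 1 oo G) (n + 1) =
      fps_nth (fps_deriv (fps_exp 1 oo G)) n"
    by simp
  also have "\<dots> = fps_nth ((fps_exp 1 oo G) * fps_deriv G) n"
    by (simp only: fps_deriv_exp_compose[OF assms])
  also have "\<dots> = (\<Sum>k=0..n. of_nat (n + 1 - k) * fps_nth G (n + 1 - k) * fps_nth (fps_exp 1 oo G) k)"
    unfolding fps_mult_nth
    by (intro sum.cong refl) (auto simp: Suc_diff_le mult_ac)
  finally show ?thesis .
qed

lemma hyp0F_nth: "fps_nth (hyp0F L) n = 1 / fact n ^ (L + 1)"
  by (simp add: hyp0F_def)

lemma bL_0: "bL L 0 = 1"
  by (simp add: bL_def)

lemma bL_Suc:
  "bL L (n + 1) = (1 / real (n + 1)) *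
     (\<Sum>k=0..n. real ((n + 1) choose k) ^ (L + 1) * real (n + 1 - k) * bL L k)"
proof -
  define G where "G = hyp0F L - 1"
  define E where "E = fps_exp (1::real) oo G"
  have G_0: "fps_nth G 0 = 0"
    by (simp add: G_def hyp0F_nth)
  have G_nth: "fps_nth G j = 1 / fact j ^ (L + 1)" if "j > 0" for j
    using that by (simp add: G_def hyp0F_nth)
  have E_nth: "fps_nth E k = bL L k / fact k ^ (L + 1)" for k
    by (simp add: bL_def E_def G_def)
  have E_recurrence: "real (n + 1) * fps_nth E (n + 1) =
      (\<Sum>k=0..n. real (n + 1 - k) * fps_nth G (n + 1 - k) * fps_nth E k)"
    unfolding E_def by (rule fps_exp_compose_nth_Suc[OF G_0])
  have summand: "fact (n + 1) ^ (L + 1) * (real (n + 1 - k) * fps_nth G (n + 1 - k) * fps_nth E k)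
      = real ((n + 1) choose k) ^ (L + 1) * real (n + 1 - k) * bL L k" if "k \<le> n" for k
  proof -
    have "real ((n + 1) choose k) ^ (L + 1) =
        fact (n + 1) ^ (L + 1) / (fact k * fact (n + 1 - k)) ^ (L + 1)"
      using that by (simp add: binomial_fact power_divide)
    moreover have "n + 1 - k > 0"
      using that by simp
    ultimately show ?thesis
      by (simp add: G_nth E_nth power_mult_distrib mult_ac del: fact_Suc of_nat_diff)
  qed
  have "real (n + 1) * bL L (n + 1) = fact (n + 1) ^ (L + 1) * (real (n + 1) * fps_nth E (n + 1))"
    by (simp add: E_nth del: fact_Suc)
  also have "\<dots> = (\<Sum>k=0..n. real ((n + 1) choose k) ^ (L + 1) * real (n + 1 - k) * bL L k)"
    unfolding E_recurrence sum_distrib_left by (rule sum.cong[OF refl], rule summand) simp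
  finally show ?thesis
    by (simp add: field_simps del: of_nat_Suc)
qed

lemma bL_Suc_binomial:
  "bL L (n + 1) = (\<Sum>k=0..n. real (n choose k) * real ((n + 1) choose k) ^ L * bL L k)"
proof -
  have absorb: "real (n + 1 - k) * real ((n + 1) choose k) = real (n + 1) * real (n choose k)"
    for k
    unfolding of_nat_mult[symmetric] using binomial_absorb_comp[of "n + 1" k] by simp
  have "bL L (n + 1) = (\<Sum>k=0..n. real ((n + 1) choose k) ^ L *
      (real (n + 1 - k) * real ((n + 1) choose k)) * bL L k / real (n + 1))"
    by (subst bL_Suc) (simp add: sum_divide_distrib mult_ac)
  also have "\<dots> = (\<Sum>k=0..n. real (n choose k) * real ((n + 1) choose k) ^ L * bL L k)"
    unfolding absorb by (intro sum.cong refl) (simp del: of_nat_Suc)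
  finally show ?thesis .
qed

lemma bL_Ints: "bL L n \<in> \<int>"
proof (induction n rule: less_induct)
  case (less n)
  then show ?case
    by (cases n) (auto simp: bL_0 bL_Suc_binomial[simplified] intro!: Ints_sum Ints_mult)
qed

lemma bL_pos: "bL L n > 0"
proof (induction n rule: less_induct)
  case (less n)
  show ?case
  proof (cases n)
    case 0
    then show ?thesis by (simp add: bL_0)
  next
    case (Suc m)
    let ?t = "\<lambda>k. real (m choose k) * real ((m + 1) choose k) ^ L * bL L k"
    have "0 < ?t 0"
      by (simp add: bL_0)
    also have "\<dots> \<le> (\<Sum>k=0..m. ?t k)"
      using less Suc by (intro member_le_sum) (auto intro: less_imp_le)
    finally show ?thesis
      using Suc bL_Suc_binomial[of L m] by simp
  qed
qed

theorem mainTheorem1: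
  shows "(\<forall>L n::nat.
           bL L (n + 1) = (1 / real (n + 1)) *
              (\<Sum>k=0..n. real ((n + 1) choose k) ^ (L + 1) * real (n + 1 - k) * bL L k)
         \<and> bL L (n + 1) = (\<Sum>k=0..n. real (n choose k) * real ((n + 1) choose k) ^ L * bL L k))
       \<and> (\<forall>L. bL L 0 = 1)
       \<and> (\<forall>L n. bL L n \<in> \<int> \<and> bL L n > 0)"
  using bL_Suc bL_Suc_binomial bL_0 bL_Ints bL_pos by blast

end
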